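(* Let $s$ be a continuous proper scoring rule with convex exposure on an $n$-outcome forecast domain $\mathcal{D}$, with expected reward function $G$ and exposure function $\mathbf{g}$. Let $\mathbf{p}_1,\dots,\mathbf{p}_m\in\mathcal{D}$ and non-negative weights $w_1,\dots,w_m$ with $\sum_i w_i=1$. Then the function \[d(\mathbf{x}):=\sum_{i=1}^m w_i\,D_G(\mathbf{x}\parallel\mathbf{p}_i),\qquad \mathbf{x}\in\mathcal{D},\] is uniquely minimized at $\mathbf{x}=\mathbf{p}^*$, the quasi-arithmetic pool of $(\mathbf{p}_i,w_i)_{i=1}^m$ with respect to $\mathbf{g}$.
   Context: $\Delta^n$ is the standard simplex in $\mathbb{R}^n$ with vertices $\delta_1,\dots,\delta_n$. An $n$-outcome forecast domain is a convex $(n-1)$-dimensional subset of $\Delta^n$. A proper scoring rule on $\mathcal{D}$ is $s:\mathcal{D}\times[n]\to\mathbb{R}$ with $\sum_j p(j)s(\mathbf{p};j)\ge\sum_j p(j)s(\mathbf{x};j)$ for all $\mathbf{p},\mathbf{x}\in\mathcal{D}$, equality only if $\mathbf{x}=\mathbf{p}$. $G(\mathbf{p}):=\sum_j p(j)s(\mathbf{p};j)$ is differentiable and strictly convex for continuous $s$, and $\mathbf{g}=\nabla G$ (values taken modulo translation by $\mathbf{1}_n$). Convex exposure means the range of $\mathbf{g}$ is convex. The QA pool is the unique $\mathbf{p}^*\in\mathcal{D}$ with $\mathbf{g}(\mathbf{p}^* )=\sum_i w_i\mathbf{g}(\mathbf{p}_i)$ (modulo $\mathbf{1}_n$). The Bregman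 divergence is $D_G(\mathbf{p}\parallel\mathbf{q}):=G(\mathbf{p})-G(\mathbf{q})-\langle\mathbf{g}(\mathbf{q}),\mathbf{p}-\mathbf{q}\rangle$. *)

theory Defs
  imports "HOL-Analysis.Analysis"
begin

text \<open>Outcomes are indexed by a finite type 'n with CARD('n) = n; forecasts are vectors in real^'n.\<close>

definition std_simplex :: "(real^'n) set" where
  "std_simplex = {p. (\<forall>j. 0 \<le> p $ j) \<and> (\<Sum>j\<in>UNIV. p $ j) = 1}"

definition forecast_domain :: "(real^'n) set \<Rightarrow> bool" where
  "forecast_domain D \<longleftrightarrow> convex D \<and> D \<subseteq> std_simplex \<and> aff_dim D = int CARD('n) - 1"

definition proper_scoring_rule :: "(real^'n) set \<Rightarrow> (real^'n \<Rightarrow> 'n \<Rightarrow> real) \<Rightarrow> bool" where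
  "proper_scoring_rule D s \<longleftrightarrow>
     (\<forall>p\<in>D. \<forall>x\<in>D. (\<Sum>j\<in>UNIV. p $ j * s x j) \<le> (\<Sum>j\<in>UNIV. p $ j * s p j)
        \<and> ((\<Sum>j\<in>UNIV. p $ j * s x j) = (\<Sum>j\<in>UNIV. p $ j * s p j) \<longrightarrow> x = p))"

definition continuous_scoring_rule :: "(real^'n) set \<Rightarrow> (real^'n \<Rightarrow> 'n \<Rightarrow> real) \<Rightarrow> bool" where
  "continuous_scoring_rule D s \<longleftrightarrow> (\<forall>j. continuous_on D (\<lambda>p. s p j))"

definition expected_reward :: "(real^'n \<Rightarrow> 'n \<Rightarrow> real) \<Rightarrow> real^'n \<Rightarrow> real" where
  "expected_reward s p = (\<Sum>j\<in>UNIV. p $ j * s p j)"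

text \<open>g is an exposure function: g(p) is a gradient of G at p (relative to D; hence
  determined only modulo translation by the all-ones vector).\<close>
definition is_exposure :: "(real^'n) set \<Rightarrow> (real^'n \<Rightarrow> 'n \<Rightarrow> real) \<Rightarrow> (real^'n \<Rightarrow> real^'n) \<Rightarrow> bool" where
  "is_exposure D s g \<longleftrightarrow>
     (\<forall>p\<in>D. (expected_reward s has_derivative (\<lambda>h. g p \<bullet> h)) (at p within D))"

definition convex_exposure :: "(real^'n) set \<Rightarrow> (real^'n \<Rightarrow> real^'n) \<Rightarrow> bool" where
  "convex_exposure D g \<longleftrightarrow> convex {g p + c *\<^sub>R vec 1 | p c. p \<in> D}"

definition qa_pool :: "(real^'n) set \<Rightarrow> (real^'n \<Rightarrow> real^'n) \<Rightarrow> nat \<Rightarrow> (nat \<Rightarrow> real^'n) \<Rightarrow> (nat \<Rightarrow> real) \<Rightarrow> real^'n \<Rightarrow> bool" where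
  "qa_pool D g m P w q \<longleftrightarrow> q \<in> D \<and>
     (\<exists>c::real. g q = (\<Sum>i\<in>{1..m}. w i *\<^sub>R g (P i)) + c *\<^sub>R vec 1)"

definition bregman :: "(real^'n \<Rightarrow> 'n \<Rightarrow> real) \<Rightarrow> (real^'n \<Rightarrow> real^'n) \<Rightarrow> real^'n \<Rightarrow> real^'n \<Rightarrow> real" where
  "bregman s g p q = expected_reward s p - expected_reward s q - g q \<bullet> (p - q)"

end

theory Submission
  imports Defs
begin

text \<open>Properness makes the expected reward G strictly convex, since G is the upper envelope of
  the affine maps p \<mapsto> \<Sum>j. p j s(x; j). A differentiable strictly convex function lies strictly
  above its tangent planes, so D_G(x \<parallel> q) > 0 for x \<noteq> q. Finally, because every forecast sums to 1,
  the defining property of the pool p* gives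
  \<Sum>i w_i D_G(x \<parallel> p_i) = \<Sum>i w_i D_G(p* \<parallel> p_i) + D_G(x \<parallel> p*),
  and convex exposure guarantees that p* exists.\<close>

definition strict_convex_on :: "'a::real_vector set \<Rightarrow> ('a \<Rightarrow> real) \<Rightarrow> bool"
  where "strict_convex_on S f \<longleftrightarrow> convex S \<and>
    (\<forall>x\<in>S. \<forall>y\<in>S. x \<noteq> y \<longrightarrow> (\<forall>u>0. \<forall>v>0. u + v = 1 \<longrightarrow> f (u *\<^sub>R x + v *\<^sub>R y) < u * f x + v * f y))"

lemma strict_convex_on_imp_convex_on:
  assumes "strict_convex_on S f"
  shows "convex_on S f"
proof (rule convex_onI)
  show "convex S" using assms by (simp add: strict_convex_on_def)
next
  fix t :: real and x y assume "0 < t" "t < 1" "x \<in> S" "y \<in> S"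
  then show "f ((1 - t) *\<^sub>R x + t *\<^sub>R y) \<le> (1 - t) * f x + t * f y"
  proof (cases "x = y")
    case True
    then show ?thesis by (simp add: scaleR_collapse) (simp add: algebra_simps)
  next
    case False
    then show ?thesis
      using assms \<open>0 < t\<close> \<open>t < 1\<close> \<open>x \<in> S\<close> \<open>y \<in> S\<close>
      unfolding strict_convex_on_def by (auto intro: less_imp_le)
  qed
qed

lemma convex_on_above_tangent:
  fixes f :: "'a::real_normed_vector \<Rightarrow> real"
  assumes f: "convex_on S f" and f': "(f has_derivative f') (at q within S)"
    and q: "q \<in> S" and x: "x \<in> S"
  shows "f' (x - q) \<le> f x - f q"
proof -
  define \<gamma> where "\<gamma> t = q + t *\<^sub>R (x - q)" for t :: real
  have \<gamma>_eq: "\<gamma> t = (1 - t) *\<^sub>R q + t *\<^sub>R x" for t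
    by (simp add: \<gamma>_def algebra_simps)
  have \<gamma>_in: "\<gamma> ` {0..1} \<subseteq> S"
    using convex_on_imp_convex[OF f] q x by (auto simp: \<gamma>_eq intro: convexD_alt)
  have "(\<gamma> has_derivative (\<lambda>t. t *\<^sub>R (x - q))) (at 0 within {0..1})"
    unfolding \<gamma>_def by (auto intro!: derivative_eq_intros)
  moreover have "(f has_derivative f') (at (\<gamma> 0) within \<gamma> ` {0..1})"
    using has_derivative_subset[OF f' \<gamma>_in] by (simp add: \<gamma>_def)
  ultimately have "(f \<circ> \<gamma> has_derivative f' \<circ> (\<lambda>t. t *\<^sub>R (x - q))) (at 0 within {0..1})"
    by (rule diff_chain_within)
  then have "(f \<circ> \<gamma> has_real_derivative f' (x - q)) (at 0 within {0..1})"
    by (rule has_derivative_imp_has_field_derivative)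
      (simp add: linear_cmul[OF has_derivative_linear[OF f']])
  then have "((\<lambda>t. (f (\<gamma> t) - f q) / t) \<longlongrightarrow> f' (x - q)) (at_right 0)"
    by (simp add: has_field_derivative_iff at_within_Icc_at_right \<gamma>_def)
  moreover have "\<forall>\<^sub>F t in at_right 0. (f (\<gamma> t) - f q) / t \<le> f x - f q"
    using eventually_at_right_real[OF zero_less_one]
  proof (rule eventually_mono)
    fix t :: real assume t: "t \<in> {0<..<1}"
    then have "f (\<gamma> t) \<le> (1 - t) * f q + t * f x"
      using convex_onD[OF f] q x by (simp add: \<gamma>_eq)
    then have "f (\<gamma> t) - f q \<le> (f x - f q) * t"
      by (simp add: algebra_simps)
    then show "(f (\<gamma> t) - f q) / t \<le> f x - f q"
      using t by (simp add: pos_divide_le_eq)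
  qed
  ultimately show ?thesis
    by (rule tendsto_upperbound) simp
qed

lemma strict_convex_on_above_tangent:
  fixes f :: "'a::real_normed_vector \<Rightarrow> real"
  assumes f: "strict_convex_on S f" and f': "(f has_derivative f') (at q within S)"
    and q: "q \<in> S" and x: "x \<in> S" and "x \<noteq> q"
  shows "f' (x - q) < f x - f q"
proof -
  define y where "y = (1/2) *\<^sub>R x + (1/2) *\<^sub>R q"
  have y: "y \<in> S"
    using f x q unfolding strict_convex_on_def y_def by (auto intro: convexD)
  have strict: "\<forall>u>0. \<forall>v>0. u + v = 1 \<longrightarrow> f (u *\<^sub>R x + v *\<^sub>R q) < u * f x + v * f q"
    using f x q \<open>x \<noteq> q\<close> unfolding strict_convex_on_def by blast
  have "f y < (1/2) * f x + (1/2) * f q"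
    using strict[rule_format, of "1/2" "1/2"] by (simp add: y_def)
  moreover have "f' (y - q) \<le> f y - f q"
    using convex_on_above_tangent[OF strict_convex_on_imp_convex_on[OF f] f' q y] .
  moreover have "y - q = (1/2) *\<^sub>R (x - q)"
    by (simp add: y_def algebra_simps) (metis scaleR_half_double scaleR_right_distrib)
  then have "f' (y - q) = f' (x - q) / 2"
    using linear_cmul[OF has_derivative_linear[OF f']] by simp
  ultimately show ?thesis
    by linarith
qed

definition expected_score :: "(real^'n \<Rightarrow> 'n \<Rightarrow> real) \<Rightarrow> real^'n \<Rightarrow> real^'n \<Rightarrow> real"
  where "expected_score s p x = (\<Sum>j\<in>UNIV. p $ j * s x j)"

lemma expected_reward_eq_expected_score: "expected_reward s p = expected_score s p p"
  by (simp add: expected_reward_def expected_score_def)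

lemma expected_score_add_scaleR:
  "expected_score s (u *\<^sub>R a + v *\<^sub>R b) x = u * expected_score s a x + v * expected_score s b x"
  by (simp add: expected_score_def algebra_simps sum.distrib sum_distrib_left)

lemma proper_scoring_ruleD:
  assumes "proper_scoring_rule D s" and "p \<in> D" and "x \<in> D" and "x \<noteq> p"
  shows "expected_score s p x < expected_reward s p"
proof -
  have "expected_score s p x \<le> expected_reward s p"
    and "expected_score s p x = expected_reward s p \<longrightarrow> x = p"
    using assms(1-3)
    unfolding proper_scoring_rule_def expected_score_def expected_reward_def by auto
  then show ?thesis
    using assms(4) by linarith
qed

lemma proper_scoring_rule_strict_convex_on:
  assumes "convex D" and "proper_scoring_rule D s"
  shows "strict_convex_on D (expected_reward s)"
  unfolding strict_convex_on_def
proof (intro conjI assms(1) ballI impI allI)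
  fix a b and u v :: real
  assume a: "a \<in> D" and b: "b \<in> D" and "a \<noteq> b" and u: "0 < u" and v: "0 < v" and "u + v = 1"
  define y where "y = u *\<^sub>R a + v *\<^sub>R b"
  have "y \<in> D"
    using assms(1) a b u v \<open>u + v = 1\<close> unfolding y_def by (auto intro: convexD)
  have "u = 1 - v" and "v = 1 - u"
    using \<open>u + v = 1\<close> by simp_all
  have "y - a = v *\<^sub>R (b - a)"
    by (simp add: y_def \<open>u = 1 - v\<close> algebra_simps)
  moreover have "y - b = u *\<^sub>R (a - b)"
    by (simp add: y_def \<open>v = 1 - u\<close> algebra_simps)
  ultimately have "y \<noteq> a" and "y \<noteq> b"
    using \<open>a \<noteq> b\<close> u v by auto
  have "expected_reward s y = u * expected_score s a y + v * expected_score s b y"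
    by (simp add: y_def expected_reward_eq_expected_score expected_score_add_scaleR)
  also have "\<dots> < u * expected_reward s a + v * expected_reward s b"
    using proper_scoring_ruleD[OF assms(2)] a b \<open>y \<in> D\<close> \<open>y \<noteq> a\<close> \<open>y \<noteq> b\<close> u v
    by (intro add_strict_mono mult_strict_left_mono) auto
  finally show "expected_reward s y < u * expected_reward s a + v * expected_reward s b" .
qed

lemma bregman_pos:
  assumes "convex D" and "proper_scoring_rule D s" and "is_exposure D s g"
    and "q \<in> D" and "x \<in> D" and "x \<noteq> q"
  shows "0 < bregman s g x q"
  using strict_convex_on_above_tangent[OF proper_scoring_rule_strict_convex_on[OF assms(1,2)]]
    assms(3-6)
  unfolding is_exposure_def bregman_def by fastforce

lemma inner_vec_1_std_simplex:
  assumes "p \<in> std_simplex"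
  shows "vec 1 \<bullet> p = 1"
  using assms by (simp add: std_simplex_def inner_vec_def)

lemma weighted_bregman_qa_pool_decomp:
  assumes q: "qa_pool D g m P w q" and "D \<subseteq> std_simplex" and x: "x \<in> D"
    and "(\<Sum>i\<in>{1..m}. w i) = 1"
  shows "(\<Sum>i\<in>{1..m}. w i * bregman s g x (P i))
    = (\<Sum>i\<in>{1..m}. w i * bregman s g q (P i)) + bregman s g x q"
proof -
  let ?G = "expected_reward s"
  obtain c where "q \<in> D" and gq: "g q = (\<Sum>i\<in>{1..m}. w i *\<^sub>R g (P i)) + c *\<^sub>R vec 1"
    using q unfolding qa_pool_def by auto
  have "vec 1 \<bullet> x = 1" and "vec 1 \<bullet> q = 1"
    using assms(2) x \<open>q \<in> D\<close> by (blast intro: inner_vec_1_std_simplex)+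
  then have "vec 1 \<bullet> (x - q) = 0"
    by (simp add: inner_diff_right)
  then have pool: "(\<Sum>i\<in>{1..m}. w i * (g (P i) \<bullet> (x - q))) = g q \<bullet> (x - q)"
    by (simp add: gq inner_add_left inner_sum_left)
  have "(\<Sum>i\<in>{1..m}. w i * bregman s g x (P i)) - (\<Sum>i\<in>{1..m}. w i * bregman s g q (P i))
      = (\<Sum>i\<in>{1..m}. w i * (?G x - ?G q - g (P i) \<bullet> (x - q)))"
    unfolding sum_subtractf[symmetric] bregman_def
    by (rule sum.cong) (simp_all add: algebra_simps inner_diff_right)
  also have "\<dots> = (\<Sum>i\<in>{1..m}. w i) * (?G x - ?G q) - (\<Sum>i\<in>{1..m}. w i * (g (P i) \<bullet> (x - q)))"
    by (simp add: sum_distrib_right sum_subtractf right_diff_distrib)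
  also have "\<dots> = bregman s g x q"
    using assms(4) pool by (simp add: bregman_def)
  finally show ?thesis
    by simp
qed

lemma qa_pool_exists:
  assumes "convex_exposure D g" and "\<forall>i\<in>{1..m}. P i \<in> D"
    and "\<forall>i\<in>{1..m}. 0 \<le> w i" and "(\<Sum>i\<in>{1..m}. w i) = 1"
  shows "\<exists>q. qa_pool D g m P w q"
proof -
  let ?C = "{g p + c *\<^sub>R vec 1 | p c. p \<in> D}"
  have "g (P i) \<in> ?C" if "i \<in> {1..m}" for i
    using assms(2) that by force
  then have "(\<Sum>i\<in>{1..m}. w i *\<^sub>R g (P i)) \<in> ?C"
    using assms(1,3,4) unfolding convex_exposure_def by (intro convex_sum) auto
  then obtain p c where "p \<in> D" and "(\<Sum>i\<in>{1..m}. w i *\<^sub>R g (P i)) = g p + c *\<^sub>R vec 1"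
    by blast
  then have "qa_pool D g m P w p"
    unfolding qa_pool_def by (auto intro!: exI[of _ "-c"])
  then show ?thesis ..
qed

theorem proposition4p3:
  fixes D :: "(real^'n) set"
    and s :: "real^'n \<Rightarrow> 'n \<Rightarrow> real"
    and g :: "real^'n \<Rightarrow> real^'n"
    and m :: nat and P :: "nat \<Rightarrow> real^'n" and w :: "nat \<Rightarrow> real"
  assumes "forecast_domain D"
    and "proper_scoring_rule D s"
    and "continuous_scoring_rule D s"
    and "is_exposure D s g"
    and "convex_exposure D g"
    and "\<forall>i\<in>{1..m}. P i \<in> D"
    and "\<forall>i\<in>{1..m}. 0 \<le> w i"
    and "(\<Sum>i\<in>{1..m}. w i) = 1"
  shows "(\<exists>!q. qa_pool D g m P w q)
    \<and> (\<forall>q. qa_pool D g m P w q \<longrightarrow>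
          (\<forall>x\<in>D. x \<noteq> q \<longrightarrow>
             (\<Sum>i\<in>{1..m}. w i * bregman s g q (P i)) < (\<Sum>i\<in>{1..m}. w i * bregman s g x (P i))))"
proof -
  have "convex D" and "D \<subseteq> std_simplex"
    using assms(1) unfolding forecast_domain_def by auto
  have minimizer: "(\<Sum>i\<in>{1..m}. w i * bregman s g q (P i)) < (\<Sum>i\<in>{1..m}. w i * bregman s g x (P i))"
    if q: "qa_pool D g m P w q" and "x \<in> D" and "x \<noteq> q" for q x
    using weighted_bregman_qa_pool_decomp[OF q \<open>D \<subseteq> std_simplex\<close> \<open>x \<in> D\<close> assms(8)]
      bregman_pos[OF \<open>convex D\<close> assms(2,4) _ \<open>x \<in> D\<close> \<open>x \<noteq> q\<close>] q
    unfolding qa_pool_def by simp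
  have "q = q'" if "qa_pool D g m P w q" and "qa_pool D g m P w q'" for q q'
    using minimizer[OF that(1)] minimizer[OF that(2)] that unfolding qa_pool_def by force
  then show ?thesis
    using qa_pool_exists[OF assms(5-8)] minimizer by blast
qed

end
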